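(* Let $X$ be a complete separable metric space, $\Sigma$ a compact Hausdorff group with Haar probability measure $\mu_\Sigma$ acting measurably on $X$ via $T_\sigma$, and $\Gamma\subset C_b(X)$. 1. If $\Gamma$ is admissible then $\Gamma^{\mathrm{inv}}_\Sigma$ is admissible. 2. If $\Gamma$ is strictly admissible and $S_\Sigma[\Gamma]\subset\Gamma$ then $\Gamma^{\mathrm{inv}}_\Sigma$ is $\Sigma$-strictly admissible.
   Context: $C_b(X)$: bounded continuous functions. $S_\Sigma[\gamma](x)=\int_\Sigma\gamma(T_\sigma(x))\mu_\Sigma(d\sigma)$; $\Gamma^{\mathrm{inv}}_\Sigma=\{\gamma\in\Gamma:\gamma\circ T_\sigma=\gamma\ \forall\sigma\}$; $\mathcal{P}_\Sigma(X)$ is the set of probability measures $P$ with $P\circ T_\sigma^{-1}=P$ for all $\sigma$. For $\mathcal{Q}\subset\mathcal{P}(X)$, a set $\Psi\subset\mathcal{M}_b(X)$ is $\mathcal{Q}$-determining if for $Q,P\in\mathcal{Q}$, $E_Q[\psi]=E_P[\psi]$ for all $\psi\in\Psi$ implies $Q=P$. The $M(X)$-topology on $C_b(X)$ is the weakest topology making $\gamma\mapsto\int\gamma d\nu$ continuous for every finite signed measure $\nu$. $\Gamma\subset C_b(X)$ is admissible if $0\in\Gamma$, $\Gamma$ is convex, and $\Gamma$ is closed in the $M(X)$-topology; strictly admissible if moreover there is a $\mathcal{P}(X)$-determining $\Psi\subset C_b(X)$ such that for each $\psi\in\Psi$ there are $c\in\mathbb{R}$, $\epsilon>0$ with $c\pm\epsilon\psi\in\Gamma$.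 An admissible $\Gamma\subset C_b(X)$ consisting of $\Sigma$-invariant functions is $\Sigma$-strictly admissible if there is a $\mathcal{P}_\Sigma(X)$-determining $\Psi\subset C_b(X)$ such that for each $\psi\in\Psi$ there are $c\in\mathbb{R}$, $\epsilon>0$ with $c\pm\epsilon\psi\in\Gamma$. *)

theory Defs
  imports "HOL-Probability.Probability" "HOL-Algebra.Group"
begin

definition Cb :: "('x::topological_space \<Rightarrow> real) set" where
  "Cb = {f. continuous_on UNIV f \<and> bounded (range f)}"

text \<open>A finite signed Borel measure is represented by its Jordan decomposition,
  i.e. as a difference nu = M1 - M2 of two finite (nonnegative) Borel measures.\<close>

definition finite_borel_measure :: "'x::topological_space measure \<Rightarrow> bool" where
  "finite_borel_measure M \<longleftrightarrow> sets M = sets (borel :: 'x measure) \<and> finite_measure M"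

definition signed_integral :: "('x measure \<times> 'x measure) \<Rightarrow> ('x \<Rightarrow> real) \<Rightarrow> real" where
  "signed_integral nu f = (\<integral>x. f x \<partial>(fst nu)) - (\<integral>x. f x \<partial>(snd nu))"

definition finite_signed_measure :: "('x::topological_space measure \<times> 'x measure) \<Rightarrow> bool" where
  "finite_signed_measure nu \<longleftrightarrow> finite_borel_measure (fst nu) \<and> finite_borel_measure (snd nu)"

definition MX_topology :: "('x::topological_space \<Rightarrow> real) topology" where
  "MX_topology = topology_generated_by
     {{g \<in> Cb. signed_integral nu g \<in> U} | nu U. finite_signed_measure nu \<and> open U}"

definition admissible :: "('x::topological_space \<Rightarrow> real) set \<Rightarrow> bool" where
  "admissible \<Gamma> \<longleftrightarrow> \<Gamma> \<subseteq> Cb \<and> (\<lambda>x. 0) \<in> \<Gamma>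
     \<and> (\<forall>g1\<in>\<Gamma>. \<forall>g2\<in>\<Gamma>. \<forall>t::real. 0 \<le> t \<and> t \<le> 1 \<longrightarrow> (\<lambda>x. t * g1 x + (1 - t) * g2 x) \<in> \<Gamma>)
     \<and> closedin MX_topology \<Gamma>"

definition prob_measures :: "'x::topological_space measure set" where
  "prob_measures = {P. sets P = sets (borel :: 'x measure) \<and> prob_space P}"

definition determining :: "'x measure set \<Rightarrow> ('x \<Rightarrow> real) set \<Rightarrow> bool" where
  "determining Q \<Psi> \<longleftrightarrow>
     (\<forall>P1\<in>Q. \<forall>P2\<in>Q. (\<forall>\<psi>\<in>\<Psi>. (\<integral>x. \<psi> x \<partial>P1) = (\<integral>x. \<psi> x \<partial>P2)) \<longrightarrow> P1 = P2)"

definition strictly_admissible :: "('x::topological_space \<Rightarrow> real) set \<Rightarrow> bool" where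
  "strictly_admissible \<Gamma> \<longleftrightarrow> admissible \<Gamma> \<and>
     (\<exists>\<Psi>. \<Psi> \<subseteq> Cb \<and> determining prob_measures \<Psi> \<and>
        (\<forall>\<psi>\<in>\<Psi>. \<exists>c \<epsilon>. \<epsilon> > 0 \<and> (\<lambda>x. c + \<epsilon> * \<psi> x) \<in> \<Gamma> \<and> (\<lambda>x. c - \<epsilon> * \<psi> x) \<in> \<Gamma>))"

definition borel_of :: "'a topology \<Rightarrow> 'a measure" where
  "borel_of T = sigma (topspace T) {U. openin T U}"

definition compact_hausdorff_group :: "('s, 'm) monoid_scheme \<Rightarrow> 's topology \<Rightarrow> bool" where
  "compact_hausdorff_group G T \<longleftrightarrow> group G \<and> topspace T = carrier G
     \<and> compact_space T \<and> Hausdorff_space T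
     \<and> continuous_map (prod_topology T T) T (\<lambda>(a, b). a \<otimes>\<^bsub>G\<^esub> b)
     \<and> continuous_map T T (\<lambda>a. inv\<^bsub>G\<^esub> a)"

definition haar_probability :: "('s, 'm) monoid_scheme \<Rightarrow> 's topology \<Rightarrow> 's measure \<Rightarrow> bool" where
  "haar_probability G T mu \<longleftrightarrow> prob_space mu \<and> sets mu = sets (borel_of T)
     \<and> space mu = topspace T
     \<and> (\<forall>s\<in>carrier G. \<forall>A\<in>sets mu. (\<lambda>a. s \<otimes>\<^bsub>G\<^esub> a) ` A \<in> sets mu
            \<and> emeasure mu ((\<lambda>a. s \<otimes>\<^bsub>G\<^esub> a) ` A) = emeasure mu A)"

definition measurable_action ::
  "('s, 'm) monoid_scheme \<Rightarrow> 's measure \<Rightarrow> ('s \<Rightarrow> 'x::topological_space \<Rightarrow> 'x) \<Rightarrow> bool" where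
  "measurable_action G mu T \<longleftrightarrow>
     (\<forall>x. T \<one>\<^bsub>G\<^esub> x = x)
     \<and> (\<forall>s\<in>carrier G. \<forall>t\<in>carrier G. \<forall>x. T (s \<otimes>\<^bsub>G\<^esub> t) x = T s (T t x))
     \<and> (\<lambda>(s, x). T s x) \<in> measurable (mu \<Otimes>\<^sub>M (borel :: 'x measure)) borel"

definition symmetrize :: "'s measure \<Rightarrow> ('s \<Rightarrow> 'x \<Rightarrow> 'x) \<Rightarrow> ('x \<Rightarrow> real) \<Rightarrow> ('x \<Rightarrow> real)" where
  "symmetrize mu T g = (\<lambda>x. \<integral>s. g (T s x) \<partial>mu)"

definition invariant_part :: "('s, 'm) monoid_scheme \<Rightarrow> ('s \<Rightarrow> 'x \<Rightarrow> 'x) \<Rightarrow> ('x \<Rightarrow> real) set \<Rightarrow> ('x \<Rightarrow> real) set" where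
  "invariant_part G T \<Gamma> = {g \<in> \<Gamma>. \<forall>s\<in>carrier G. g \<circ> T s = g}"

definition invariant_prob_measures ::
  "('s, 'm) monoid_scheme \<Rightarrow> ('s \<Rightarrow> 'x::topological_space \<Rightarrow> 'x) \<Rightarrow> 'x measure set" where
  "invariant_prob_measures G T =
     {P \<in> prob_measures. \<forall>s\<in>carrier G. distr P (borel :: 'x measure) (T s) = P}"

definition sigma_strictly_admissible ::
  "('s, 'm) monoid_scheme \<Rightarrow> ('s \<Rightarrow> 'x::topological_space \<Rightarrow> 'x) \<Rightarrow> ('x \<Rightarrow> real) set \<Rightarrow> bool" where
  "sigma_strictly_admissible G T \<Gamma> \<longleftrightarrow> admissible \<Gamma>
     \<and> (\<forall>g\<in>\<Gamma>. \<forall>s\<in>carrier G. g \<circ> T s = g)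
     \<and> (\<exists>\<Psi>. \<Psi> \<subseteq> Cb \<and> determining (invariant_prob_measures G T) \<Psi> \<and>
        (\<forall>\<psi>\<in>\<Psi>. \<exists>c \<epsilon>. \<epsilon> > 0 \<and> (\<lambda>x. c + \<epsilon> * \<psi> x) \<in> \<Gamma> \<and> (\<lambda>x. c - \<epsilon> * \<psi> x) \<in> \<Gamma>))"

end

theory Submission imports Defs begin

text \<open>\<open>\<Sigma>\<close>-invariance of \<open>h\<close> is the family of conditions \<open>h (T \<sigma> x) = h x\<close>, each closed in the
  M(X)-topology because it says that \<open>h\<close> integrates to zero against \<open>\<delta>\<^bsub>T \<sigma> x\<^esub> - \<delta>\<^bsub>x\<^esub>\<close>; so
  intersecting \<open>\<Gamma>\<close> with them preserves admissibility. For strict admissibility, symmetrise the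
  determining family \<open>\<Psi>\<close>: \<open>S\<^sub>\<Sigma> \<psi>\<close> is \<open>\<Sigma>\<close>-invariant because the Haar measure of a compact group
  is also inversion invariant; \<open>S\<^sub>\<Sigma>[\<Gamma>] \<subseteq> \<Gamma>\<close> turns \<open>c \<plusminus> \<epsilon> \<psi> \<in> \<Gamma>\<close> into \<open>c \<plusminus> \<epsilon> S\<^sub>\<Sigma> \<psi> \<in> \<Gamma>\<^bsup>inv\<^esup>\<^sub>\<Sigma>\<close>;
  and for \<open>\<Sigma>\<close>-invariant \<open>P\<close> Fubini gives \<open>E\<^sub>P[S\<^sub>\<Sigma> \<psi>] = E\<^sub>P[\<psi>]\<close>, so \<open>S\<^sub>\<Sigma>[\<Psi>]\<close> is
  \<open>P\<^sub>\<Sigma>(X)\<close>-determining.\<close>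

lemma Cb_borel_measurable: "g \<in> Cb \<Longrightarrow> g \<in> borel_measurable borel"
  unfolding Cb_def by (auto intro: borel_measurable_continuous_onI)

lemma Cb_bounded:
  assumes "g \<in> Cb"
  obtains B where "\<And>z. \<bar>g z\<bar> \<le> B"
  using assms unfolding Cb_def bounded_iff by auto

lemma Cb_cancel_affine:
  assumes h: "(\<lambda>x. c + e * f x) \<in> Cb" and e: "e \<noteq> 0"
  shows "f \<in> Cb"
proof -
  let ?h = "\<lambda>x. c + e * f x"
  have f: "f = (\<lambda>x. (1 / e) * (?h x - c))" using e by auto
  have hc: "continuous_on UNIV ?h" and hb: "bounded (range ?h)" using h unfolding Cb_def by auto
  have "continuous_on UNIV (\<lambda>x. (1 / e) * (?h x - c))"
    by (rule continuous_on_mult_left, rule continuous_on_diff[OF hc continuous_on_const])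
  moreover have "bounded ((\<lambda>y. (1 / e) *\<^sub>R y) ` ((+) (- c) ` range ?h))"
    using hb by (intro bounded_scaling bounded_translation)
  moreover have "(\<lambda>y. (1 / e) *\<^sub>R y) ` ((+) (- c) ` range ?h) = range (\<lambda>x. (1 / e) * (?h x - c))"
    by (auto simp: image_image)
  ultimately show ?thesis unfolding Cb_def by (subst f) simp
qed

lemma finite_signed_measure_return:
  "finite_signed_measure (return borel a, return borel b)"
  unfolding finite_signed_measure_def finite_borel_measure_def
  by (simp add: prob_space.finite_measure prob_space_return)

lemma topspace_MX_topology: "topspace MX_topology = (Cb :: ('x::topological_space \<Rightarrow> real) set)"
proof -
  let ?S = "{{g \<in> Cb. signed_integral nu g \<in> U} | nu U. finite_signed_measure nu \<and> open (U :: real set)}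
    :: ('x \<Rightarrow> real) set set"
  have "Cb = {g \<in> Cb. signed_integral (return borel (a::'x), return borel a) g \<in> UNIV}" by simp
  also have "\<dots> \<in> ?S"
    by (rule CollectI, rule exI[of _ "(return borel a, return borel a)"], rule exI[of _ UNIV])
      (simp add: finite_signed_measure_return)
  finally have "Cb \<subseteq> \<Union>?S" by blast
  moreover have "\<Union>?S \<subseteq> Cb" by auto
  ultimately show ?thesis
    unfolding MX_topology_def topology_generated_by_topspace by (rule equalityI[rotated])
qed

lemma closedin_MX_topology_eq_at: "closedin MX_topology {h \<in> Cb. h a = h b}"
proof -
  define nu where "nu = (return borel a, return borel b)"
  have "signed_integral nu h = h a - h b" if "h \<in> Cb" for h
    using Cb_borel_measurable[OF that] unfolding signed_integral_def nu_def
    by (simp add: integral_return)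
  then have "{h \<in> Cb. h a = h b} = topspace MX_topology - {h \<in> Cb. signed_integral nu h \<in> - {0}}"
    unfolding topspace_MX_topology by auto
  moreover have "openin MX_topology {h \<in> Cb. signed_integral nu h \<in> - {0}}"
    unfolding MX_topology_def
    by (rule topology_generated_by_Basis, rule CollectI, rule exI[of _ nu], rule exI[of _ "- {0}"])
      (simp_all add: nu_def finite_signed_measure_return open_Compl)
  ultimately show ?thesis by auto
qed

lemma invariant_part_eq_Inter:
  assumes "\<Gamma> \<subseteq> Cb"
  shows "invariant_part G T \<Gamma> = \<Inter> (insert \<Gamma> {{h \<in> Cb. h (T s x) = h x} | s x. s \<in> carrier G})"
  using assms unfolding invariant_part_def by (auto simp: fun_eq_iff)

lemma admissible_invariant_part:
  assumes "admissible \<Gamma>"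
  shows "admissible (invariant_part G T \<Gamma>)"
proof -
  have \<Gamma>: "\<Gamma> \<subseteq> Cb" "closedin MX_topology \<Gamma>" using assms unfolding admissible_def by auto
  have "closedin MX_topology (invariant_part G T \<Gamma>)"
    unfolding invariant_part_eq_Inter[OF \<Gamma>(1)]
    by (rule closedin_Inter) (use \<Gamma>(2) closedin_MX_topology_eq_at in auto)
  with assms show ?thesis
    unfolding admissible_def invariant_part_def by (auto simp: fun_eq_iff)
qed

locale left_haar_prob_space = group G + prob_space mu
  for G :: "('s, 'm) monoid_scheme" (structure) and mu :: "'s measure" +
  assumes space_eq: "space mu = carrier G"
    and left_invariant: "\<And>u A. u \<in> carrier G \<Longrightarrow> A \<in> sets mu \<Longrightarrow>
      (\<lambda>a. u \<otimes> a) ` A \<in> sets mu \<and> emeasure mu ((\<lambda>a. u \<otimes> a) ` A) = emeasure mu A"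
    and measurable_inv: "(\<lambda>a. inv a) \<in> measurable mu mu"
begin

lemma vimage_left_mult:
  assumes "u \<in> carrier G" "A \<subseteq> carrier G"
  shows "(\<lambda>s. u \<otimes> s) -` A \<inter> carrier G = (\<lambda>a. inv u \<otimes> a) ` A"
proof (intro equalityI subsetI)
  fix s assume "s \<in> (\<lambda>s. u \<otimes> s) -` A \<inter> carrier G"
  then show "s \<in> (\<lambda>a. inv u \<otimes> a) ` A"
    using assms by (intro image_eqI[of _ _ "u \<otimes> s"]) (auto simp: m_assoc[symmetric])
next
  fix s assume "s \<in> (\<lambda>a. inv u \<otimes> a) ` A"
  then show "s \<in> (\<lambda>s. u \<otimes> s) -` A \<inter> carrier G"
    using assms by (auto simp: m_assoc[symmetric])
qed

lemma measurable_left_mult: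
  assumes "u \<in> carrier G"
  shows "(\<lambda>s. u \<otimes> s) \<in> measurable mu mu"
proof (rule measurableI)
  fix A assume A: "A \<in> sets mu"
  then have "A \<subseteq> carrier G" using sets.sets_into_space space_eq by blast
  with A show "(\<lambda>s. u \<otimes> s) -` A \<inter> space mu \<in> sets mu"
    using assms left_invariant[of "inv u" A] by (simp add: space_eq vimage_left_mult)
qed (use assms space_eq in auto)

lemma distr_left_mult:
  assumes "u \<in> carrier G"
  shows "distr mu mu (\<lambda>s. u \<otimes> s) = mu"
proof (rule measure_eqI)
  fix A assume "A \<in> sets (distr mu mu (\<lambda>s. u \<otimes> s))"
  then have A: "A \<in> sets mu" by simp
  then have "A \<subseteq> carrier G" using sets.sets_into_space space_eq by blast
  with A show "emeasure (distr mu mu (\<lambda>s. u \<otimes> s)) A = emeasure mu A"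
    using assms left_invariant[of "inv u" A]
    by (simp add: emeasure_distr measurable_left_mult space_eq vimage_left_mult)
qed simp

lemma integral_left_mult:
  fixes f :: "'s \<Rightarrow> real"
  assumes "u \<in> carrier G" and "f \<in> borel_measurable mu"
  shows "(\<integral>s. f (u \<otimes> s) \<partial>mu) = (\<integral>s. f s \<partial>mu)"
  using integral_distr[OF measurable_left_mult assms(2)] distr_left_mult assms(1) by simp

text \<open>Fubini applied to \<open>f (t\<inverse> s)\<close>, with left invariance in each variable. Joint
  measurability is assumed because the group multiplication need not be measurable for the
  product \<sigma>-algebra.\<close>

lemma integral_inv:
  fixes f :: "'s \<Rightarrow> real"
  assumes f: "f \<in> borel_measurable mu" and B: "\<And>s. \<bar>f s\<bar> \<le> B"
    and joint: "(\<lambda>(s, t). f (inv t \<otimes> s)) \<in> borel_measurable (mu \<Otimes>\<^sub>M mu)"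
  shows "(\<integral>s. f (inv s) \<partial>mu) = (\<integral>s. f s \<partial>mu)"
proof -
  interpret MM: pair_prob_space mu mu by unfold_locales
  have f_inv: "(\<lambda>s. f (inv s)) \<in> borel_measurable mu"
    using measurable_comp[OF measurable_inv f] by (simp add: o_def)
  have "integrable (mu \<Otimes>\<^sub>M mu) (\<lambda>(s, t). f (inv t \<otimes> s))"
    using B joint by (intro MM.integrable_const_bound[where B=B]) (auto simp: case_prod_beta)
  then have Fubini: "(\<integral>t. (\<integral>s. f (inv t \<otimes> s) \<partial>mu) \<partial>mu) = (\<integral>s. (\<integral>t. f (inv t \<otimes> s) \<partial>mu) \<partial>mu)"
    using MM.Fubini_integral[of "\<lambda>s t. f (inv t \<otimes> s)"] by simp
  have "(\<integral>s. f s \<partial>mu) = (\<integral>t. (\<integral>s. f s \<partial>mu) \<partial>mu)"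
    by (simp add: prob_space)
  also have "\<dots> = (\<integral>t. (\<integral>s. f (inv t \<otimes> s) \<partial>mu) \<partial>mu)"
    by (rule Bochner_Integration.integral_cong) (simp_all add: integral_left_mult f space_eq)
  also have "\<dots> = (\<integral>s. (\<integral>t. f (inv (inv s \<otimes> t)) \<partial>mu) \<partial>mu)"
    unfolding Fubini
    by (intro Bochner_Integration.integral_cong) (auto simp: space_eq inv_mult_group)
  also have "\<dots> = (\<integral>s. (\<integral>t. f (inv t) \<partial>mu) \<partial>mu)"
    by (rule Bochner_Integration.integral_cong) (simp_all add: integral_left_mult[OF _ f_inv] space_eq)
  also have "\<dots> = (\<integral>t. f (inv t) \<partial>mu)"
    by (simp add: prob_space)
  finally show ?thesis ..
qed

end

locale haar_action = left_haar_prob_space G mu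
  for G :: "('s, 'm) monoid_scheme" (structure) and mu :: "'s measure" +
  fixes T :: "'s \<Rightarrow> 'x::topological_space \<Rightarrow> 'x"
  assumes action: "measurable_action G mu T"
begin

lemma action_mult: "s \<in> carrier G \<Longrightarrow> t \<in> carrier G \<Longrightarrow> T (s \<otimes> t) x = T s (T t x)"
  using action unfolding measurable_action_def by auto

lemma measurable_action_pair: "(\<lambda>(s, x). T s x) \<in> measurable (mu \<Otimes>\<^sub>M borel) borel"
  using action unfolding measurable_action_def by auto

lemma measurable_orbit: "(\<lambda>s. T s y) \<in> measurable mu borel"
  using measurable_comp[OF measurable_Pair2' measurable_action_pair, of y] by (simp add: o_def)

lemma measurable_translate: "s \<in> space mu \<Longrightarrow> T s \<in> measurable borel borel"
  using measurable_comp[OF measurable_Pair1' measurable_action_pair, of s] by (simp add: o_def)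

lemma integral_inv_orbit:
  fixes g :: "'x \<Rightarrow> real"
  assumes g: "g \<in> borel_measurable borel" and B: "\<And>z. \<bar>g z\<bar> \<le> B"
  shows "(\<integral>s. g (T (inv s) y) \<partial>mu) = (\<integral>s. g (T s y) \<partial>mu)"
proof -
  have orbit: "(\<lambda>s. g (T s y)) \<in> borel_measurable mu"
    using measurable_comp[OF measurable_orbit g] by (simp add: o_def)
  have "(\<lambda>p. (inv (snd p), T (fst p) y)) \<in> measurable (mu \<Otimes>\<^sub>M mu) (mu \<Otimes>\<^sub>M borel)"
    using measurable_comp[OF measurable_snd measurable_inv] measurable_comp[OF measurable_fst measurable_orbit]
    by (intro measurable_Pair) (simp_all add: o_def)
  from measurable_comp[OF this measurable_comp[OF measurable_action_pair g]]
  have "(\<lambda>p. g (T (inv (snd p)) (T (fst p) y))) \<in> borel_measurable (mu \<Otimes>\<^sub>M mu)"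
    by (simp add: o_def)
  \<comment> \<open>the action, unlike the multiplication, is jointly measurable: \<open>T (t\<inverse> s) y = T t\<inverse> (T s y)\<close>\<close>
  then have "(\<lambda>(s, t). g (T (inv t \<otimes> s) y)) \<in> borel_measurable (mu \<Otimes>\<^sub>M mu)"
    by (rule measurable_cong[THEN iffD1, rotated]) (auto simp: space_pair_measure space_eq action_mult)
  then show ?thesis
    using integral_inv[OF orbit, of B] B by simp
qed

lemma symmetrize_invariant:
  fixes g :: "'x \<Rightarrow> real"
  assumes g: "g \<in> borel_measurable borel" and B: "\<And>z. \<bar>g z\<bar> \<le> B" and t: "t \<in> carrier G"
  shows "symmetrize mu T g (T t x) = symmetrize mu T g x"
proof -
  have inv_orbit: "(\<lambda>s. g (T (inv s) x)) \<in> borel_measurable mu"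
    using measurable_comp[OF measurable_inv measurable_comp[OF measurable_orbit g]] by (simp add: o_def)
  have "symmetrize mu T g (T t x) = (\<integral>s. g (T (inv s) (T t x)) \<partial>mu)"
    unfolding symmetrize_def by (rule integral_inv_orbit[OF g B, symmetric])
  also have "\<dots> = (\<integral>s. g (T (inv (inv t \<otimes> s)) x) \<partial>mu)"
    by (rule Bochner_Integration.integral_cong) (use t in \<open>auto simp: space_eq inv_mult_group action_mult\<close>)
  also have "\<dots> = (\<integral>s. g (T (inv s) x) \<partial>mu)"
    by (rule integral_left_mult) (use t inv_orbit in auto)
  also have "\<dots> = symmetrize mu T g x"
    unfolding symmetrize_def by (rule integral_inv_orbit[OF g B])
  finally show ?thesis .
qed

lemma symmetrize_affine:
  fixes g :: "'x \<Rightarrow> real"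
  assumes g: "g \<in> borel_measurable borel" and B: "\<And>z. \<bar>g z\<bar> \<le> B"
  shows "symmetrize mu T (\<lambda>x. c + a * g x) = (\<lambda>x. c + a * symmetrize mu T g x)"
proof
  fix x
  have "integrable mu (\<lambda>s. g (T s x))"
    using measurable_comp[OF measurable_orbit g] B by (intro integrable_const_bound[where B=B]) (auto simp: o_def)
  then show "symmetrize mu T (\<lambda>x. c + a * g x) x = c + a * symmetrize mu T g x"
    unfolding symmetrize_def by (simp add: prob_space)
qed

lemma integral_symmetrize:
  fixes g :: "'x \<Rightarrow> real"
  assumes g: "g \<in> borel_measurable borel" and B: "\<And>z. \<bar>g z\<bar> \<le> B"
    and P: "P \<in> invariant_prob_measures G T"
  shows "(\<integral>x. symmetrize mu T g x \<partial>P) = (\<integral>x. g x \<partial>P)"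
proof -
  have sets_P: "sets P = sets borel" and invariant: "\<And>s. s \<in> carrier G \<Longrightarrow> distr P borel (T s) = P"
    using P unfolding invariant_prob_measures_def prob_measures_def by auto
  interpret P: prob_space P using P unfolding invariant_prob_measures_def prob_measures_def by auto
  interpret MP: pair_prob_space mu P by unfold_locales
  have "sets (mu \<Otimes>\<^sub>M P) = sets (mu \<Otimes>\<^sub>M borel)"
    by (rule sets_pair_measure_cong) (simp_all add: sets_P)
  then have "(\<lambda>(s, x). g (T s x)) \<in> borel_measurable (mu \<Otimes>\<^sub>M P)"
    using measurable_comp[OF measurable_action_pair g] by (simp add: o_def case_prod_beta cong: measurable_cong_sets)
  then have "integrable (mu \<Otimes>\<^sub>M P) (\<lambda>(s, x). g (T s x))"
    using B by (intro MP.integrable_const_bound[where B=B]) (auto simp: case_prod_beta)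
  then have "(\<integral>x. symmetrize mu T g x \<partial>P) = (\<integral>s. (\<integral>x. g (T s x) \<partial>P) \<partial>mu)"
    unfolding symmetrize_def using MP.Fubini_integral[of "\<lambda>s x. g (T s x)"] by simp
  also have "\<dots> = (\<integral>s. (\<integral>x. g x \<partial>P) \<partial>mu)"
  proof (rule Bochner_Integration.integral_cong)
    fix s assume s: "s \<in> space mu"
    have "T s \<in> measurable P borel"
      using measurable_translate[OF s] by (simp cong: measurable_cong_sets add: sets_P)
    then show "(\<integral>x. g (T s x) \<partial>P) = (\<integral>x. g x \<partial>P)"
      using integral_distr[of "T s" P borel g] g invariant s space_eq by simp
  qed simp
  also have "\<dots> = (\<integral>x. g x \<partial>P)" by (simp add: prob_space)
  finally show ?thesis .
qed

lemma symmetrize_affine_mem_invariant_part: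
  assumes \<Gamma>: "\<Gamma> \<subseteq> Cb" "symmetrize mu T ` \<Gamma> \<subseteq> \<Gamma>"
    and \<psi>: "\<psi> \<in> Cb" and shift: "(\<lambda>x. c + a * \<psi> x) \<in> \<Gamma>"
  shows "(\<lambda>x. c + a * symmetrize mu T \<psi> x) \<in> invariant_part G T \<Gamma>"
proof -
  let ?h = "\<lambda>x. c + a * \<psi> x"
  obtain B where B: "\<And>z. \<bar>?h z\<bar> \<le> B" using Cb_bounded shift \<Gamma>(1) by blast
  have h: "?h \<in> borel_measurable borel" using Cb_borel_measurable shift \<Gamma>(1) by blast
  obtain B' where B': "\<And>z. \<bar>\<psi> z\<bar> \<le> B'" using Cb_bounded \<psi> by blast
  have "symmetrize mu T ?h = (\<lambda>x. c + a * symmetrize mu T \<psi> x)"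
    by (rule symmetrize_affine[OF Cb_borel_measurable[OF \<psi>] B'])
  moreover have "symmetrize mu T ?h \<in> \<Gamma>" using \<Gamma>(2) shift by blast
  moreover have "symmetrize mu T ?h \<circ> T s = symmetrize mu T ?h" if "s \<in> carrier G" for s
    using symmetrize_invariant[OF h B that] by (simp add: fun_eq_iff)
  ultimately show ?thesis unfolding invariant_part_def by auto
qed

lemma determining_symmetrize:
  assumes "\<Psi> \<subseteq> Cb" and "determining prob_measures \<Psi>"
  shows "determining (invariant_prob_measures G T) (symmetrize mu T ` \<Psi>)"
  unfolding determining_def
proof (intro ballI impI)
  fix P1 P2 assume P: "P1 \<in> invariant_prob_measures G T" "P2 \<in> invariant_prob_measures G T"
    and eq: "\<forall>\<phi>\<in>symmetrize mu T ` \<Psi>. (\<integral>x. \<phi> x \<partial>P1) = (\<integral>x. \<phi> x \<partial>P2)"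
  have "(\<integral>x. \<psi> x \<partial>P1) = (\<integral>x. \<psi> x \<partial>P2)" if \<psi>_mem: "\<psi> \<in> \<Psi>" for \<psi>
  proof -
    have \<psi>: "\<psi> \<in> borel_measurable borel" using Cb_borel_measurable \<psi>_mem assms(1) by blast
    obtain B where B: "\<And>z. \<bar>\<psi> z\<bar> \<le> B" using Cb_bounded \<psi>_mem assms(1) by blast
    show ?thesis
      using eq \<psi>_mem integral_symmetrize[OF \<psi> B P(1)] integral_symmetrize[OF \<psi> B P(2)] by auto
  qed
  moreover have "P1 \<in> prob_measures" "P2 \<in> prob_measures"
    using P unfolding invariant_prob_measures_def by auto
  ultimately show "P1 = P2" using assms(2) unfolding determining_def by blast
qed

lemma sigma_strictly_admissible_invariant_part:
  assumes "strictly_admissible \<Gamma>" and symmetrize_closed: "symmetrize mu T ` \<Gamma> \<subseteq> \<Gamma>"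
  shows "sigma_strictly_admissible G T (invariant_part G T \<Gamma>)"
proof -
  obtain \<Psi> where adm: "admissible \<Gamma>" and \<Psi>: "\<Psi> \<subseteq> Cb" "determining prob_measures \<Psi>"
    and shifts: "\<And>\<psi>. \<psi> \<in> \<Psi> \<Longrightarrow> \<exists>c \<epsilon>. \<epsilon> > 0 \<and> (\<lambda>x. c + \<epsilon> * \<psi> x) \<in> \<Gamma> \<and> (\<lambda>x. c - \<epsilon> * \<psi> x) \<in> \<Gamma>"
    using assms(1) unfolding strictly_admissible_def by blast
  have \<Gamma>: "\<Gamma> \<subseteq> Cb" using adm unfolding admissible_def by auto
  have symmetrized_shifts: "\<exists>c \<epsilon>. \<epsilon> > 0
      \<and> (\<lambda>x. c + \<epsilon> * symmetrize mu T \<psi> x) \<in> invariant_part G T \<Gamma>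
      \<and> (\<lambda>x. c - \<epsilon> * symmetrize mu T \<psi> x) \<in> invariant_part G T \<Gamma>" if \<psi>: "\<psi> \<in> \<Psi>" for \<psi>
  proof -
    obtain c \<epsilon> where \<epsilon>: "\<epsilon> > 0"
      and plus: "(\<lambda>x. c + \<epsilon> * \<psi> x) \<in> \<Gamma>" and minus: "(\<lambda>x. c + (- \<epsilon>) * \<psi> x) \<in> \<Gamma>"
      using shifts[OF \<psi>] by auto
    have "\<psi> \<in> Cb" using \<Psi>(1) \<psi> by blast
    from symmetrize_affine_mem_invariant_part[OF \<Gamma> symmetrize_closed this plus]
      symmetrize_affine_mem_invariant_part[OF \<Gamma> symmetrize_closed this minus]
    show ?thesis using \<epsilon> by auto
  qed
  \<comment> \<open>the action is only measurable, so continuity of \<open>S\<^sub>\<Sigma> \<psi>\<close> comes from \<open>c + \<epsilon> S\<^sub>\<Sigma> \<psi> \<in> \<Gamma> \<subseteq> Cb\<close>\<close>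
  have symmetrized_Cb: "symmetrize mu T ` \<Psi> \<subseteq> Cb"
  proof
    fix \<phi> assume "\<phi> \<in> symmetrize mu T ` \<Psi>"
    then obtain c \<epsilon> where "\<epsilon> > 0" and "(\<lambda>x. c + \<epsilon> * \<phi> x) \<in> invariant_part G T \<Gamma>"
      using symmetrized_shifts by blast
    then have "(\<lambda>x. c + \<epsilon> * \<phi> x) \<in> Cb" and "\<epsilon> \<noteq> 0" using \<Gamma> unfolding invariant_part_def by auto
    then show "\<phi> \<in> Cb" by (rule Cb_cancel_affine)
  qed
  show ?thesis
    unfolding sigma_strictly_admissible_def
  proof (intro conjI exI[of _ "symmetrize mu T ` \<Psi>"])
    show "admissible (invariant_part G T \<Gamma>)" by (rule admissible_invariant_part[OF adm])
  qed (use symmetrized_Cb determining_symmetrize[OF \<Psi>] symmetrized_shifts in \<open>auto simp: invariant_part_def\<close>)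
qed

end

lemma measurable_borel_of_continuous_map:
  assumes "continuous_map S S' f"
  shows "f \<in> measurable (borel_of S) (borel_of S')"
  unfolding borel_of_def
proof (rule measurable_measure_of)
  show "{U. openin S' U} \<subseteq> Pow (topspace S')" using openin_subset by blast
  show "f \<in> space (sigma (topspace S) {U. openin S U}) \<rightarrow> topspace S'"
    using assms by (auto simp: continuous_map_def space_measure_of_conv)
  fix U assume "U \<in> {U. openin S' U}"
  then have "openin S {x \<in> topspace S. f x \<in> U}"
    using assms openin_continuous_map_preimage by blast
  moreover have "f -` U \<inter> space (sigma (topspace S) {U. openin S U}) = {x \<in> topspace S. f x \<in> U}"
    by (auto simp: space_measure_of_conv)
  ultimately show "f -` U \<inter> space (sigma (topspace S) {U. openin S U})
      \<in> sets (sigma (topspace S) {U. openin S U})"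
    using openin_subset by (auto simp: sets_measure_of_conv)
qed

lemma haar_actionI:
  assumes "compact_hausdorff_group G TS" and "haar_probability G TS mu"
    and "measurable_action G mu T"
  shows "haar_action G mu T"
proof -
  have "group G" and "topspace TS = carrier G" and "continuous_map TS TS (\<lambda>a. inv\<^bsub>G\<^esub> a)"
    using assms(1) unfolding compact_hausdorff_group_def by auto
  moreover have "prob_space mu" and "sets mu = sets (borel_of TS)" and "space mu = topspace TS"
    and "\<forall>u\<in>carrier G. \<forall>A\<in>sets mu. (\<lambda>a. u \<otimes>\<^bsub>G\<^esub> a) ` A \<in> sets mu
            \<and> emeasure mu ((\<lambda>a. u \<otimes>\<^bsub>G\<^esub> a) ` A) = emeasure mu A"
    using assms(2) unfolding haar_probability_def by auto
  ultimately show ?thesis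
    using assms(3) measurable_borel_of_continuous_map[of TS TS "\<lambda>a. inv\<^bsub>G\<^esub> a"]
    by (intro haar_action.intro left_haar_prob_space.intro left_haar_prob_space_axioms.intro
        haar_action_axioms.intro) (simp_all cong: measurable_cong_sets)
qed

theorem lemma4:
  fixes G :: "('s, 'm) monoid_scheme"
    and TS :: "'s topology"
    and mu :: "'s measure"
    and T :: "'s \<Rightarrow> 'x::polish_space \<Rightarrow> 'x"
    and \<Gamma> :: "('x \<Rightarrow> real) set"
  assumes "compact_hausdorff_group G TS"
    and "haar_probability G TS mu"
    and "measurable_action G mu T"
    and "\<Gamma> \<subseteq> Cb"
  shows "(admissible \<Gamma> \<longrightarrow> admissible (invariant_part G T \<Gamma>))
    \<and> (strictly_admissible \<Gamma> \<and> symmetrize mu T ` \<Gamma> \<subseteq> \<Gamma>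
         \<longrightarrow> sigma_strictly_admissible G T (invariant_part G T \<Gamma>))"
proof -
  interpret haar_action G mu T using assms(1-3) by (rule haar_actionI)
  show ?thesis using admissible_invariant_part sigma_strictly_admissible_invariant_part by blast
qed

end
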